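(* Let $\lambda>0$, $A\in\mathbb{R}^{m\times n}$, $b\in\mathbb{R}^m$, let $q=q_1-q_2:\mathbb{R}^m\to[0,+\infty)$ where $q_1:\mathbb{R}^m\to\mathbb{R}$ is continuously differentiable with Lipschitz continuous gradient and $q_2:\mathbb{R}^m\to\mathbb{R}$ is convex and continuous, and let $\mathcal{X}\subseteq\mathbb{R}^n$ be a closed hyperrectangle (possibly unbounded) with $0\in\mathcal{X}$. Set $\Phi(x):=\lambda\frac{\|x\|_1^2}{\|x\|_2^2}+q(Ax-b)$ for $x\neq 0$ and $\nu^\star:=\inf\{\Phi(x):x\in\mathcal{X}\setminus\{0\}\}$, and assume $\nu^\star<\lambda+q(-b)$. Let $\{x^k:k\in\mathbb{N}\}$ be a minimizing sequence, i.e. $x^k\in\mathcal{X}\setminus\{0\}$ for all $k$ and $\lim_{k\to\infty}\Phi(x^k)=\nu^\star$. Then every accumulation point $x^\star$ of $\{x^k\}$ is an optimal solution, i.e. $x^\star\in\mathcal{X}\setminus\{0\}$ and $\Phi(x^\star)=\nu^\star$.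
   Context: A closed hyperrectangle is a set $\{x\in\mathbb{R}^n:\underline{x}\le x\le\overline{x}\}$ (componentwise) with $\underline{x}\in(\mathbb{R}\cup\{-\infty\})^n$, $\overline{x}\in(\mathbb{R}\cup\{+\infty\})^n$. The problem considered is $\min_{x\in\mathcal{X}}\Phi(x)$; an optimal solution is a point of $\mathcal{X}\setminus\{0\}$ at which $\Phi$ attains $\nu^\star$. The inequality $\nu^\star<\lambda+q(-b)$ is a standing assumption of the paper (it excludes the trivial solution $0$). *)

theory Defs
  imports "HOL-Analysis.Analysis"
begin

definition l1norm :: "real ^ 'n \<Rightarrow> real" where
  "l1norm x = (\<Sum>i\<in>UNIV. \<bar>x $ i\<bar>)"

definition hyperrect :: "('n \<Rightarrow> ereal) \<Rightarrow> ('n \<Rightarrow> ereal) \<Rightarrow> (real ^ 'n) set" where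
  "hyperrect lo hi = {x. \<forall>i. lo i \<le> ereal (x $ i) \<and> ereal (x $ i) \<le> hi i}"

definition Phi :: "real \<Rightarrow> (real ^ 'm \<Rightarrow> real) \<Rightarrow> real ^ 'n ^ 'm \<Rightarrow> real ^ 'm \<Rightarrow> real ^ 'n \<Rightarrow> real" where
  "Phi lam q A b x = lam * (l1norm x)\<^sup>2 / (norm x)\<^sup>2 + q (A *v x - b)"

end

theory Submission
  imports Defs
begin

text \<open>Since \<open>\<parallel>x\<parallel>\<^sub>2 \<le> \<parallel>x\<parallel>\<^sub>1\<close>, \<open>\<Phi>(x) \<ge> \<lambda> + q(Ax - b)\<close> for every \<open>x \<noteq> 0\<close>, so a minimizing
  sequence converging to \<open>0\<close> would force \<open>\<nu>\<^sup>\<star> \<ge> \<lambda> + q(-b)\<close>, contradicting the standing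
  assumption. Away from \<open>0\<close>, \<open>\<Phi>\<close> is continuous and the hyperrectangle is closed, so the
  accumulation point is feasible and attains \<open>\<nu>\<^sup>\<star>\<close>.\<close>

lemma norm_le_l1norm: "norm (x::real^'n) \<le> l1norm x"
  unfolding norm_vec_def l1norm_def using L2_set_le_sum_abs[of "\<lambda>i. norm (x$i)" UNIV] by simp

lemma continuous_on_l1norm: "continuous_on UNIV l1norm"
  unfolding l1norm_def by (intro continuous_intros)

lemma closed_hyperrect: "closed (hyperrect lo hi)"
  unfolding hyperrect_def
  by (intro closed_Collect_all closed_Collect_conj closed_Collect_le continuous_intros)

lemma lam_plus_q_le_Phi:
  assumes "lam \<ge> 0" and "x \<noteq> 0"
  shows "lam + q (A *v x - b) \<le> Phi lam q A b x"
proof -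
  have "(norm x)\<^sup>2 \<le> (l1norm x)\<^sup>2"
    using norm_le_l1norm[of x] by (intro power_mono) auto
  with \<open>x \<noteq> 0\<close> have "1 \<le> (l1norm x)\<^sup>2 / (norm x)\<^sup>2"
    by simp
  with \<open>lam \<ge> 0\<close> have "lam \<le> lam * ((l1norm x)\<^sup>2 / (norm x)\<^sup>2)"
    by (metis mult.right_neutral mult_left_mono)
  then show ?thesis
    unfolding Phi_def by simp
qed

lemma isCont_Phi:
  assumes "continuous_on UNIV q" and "x \<noteq> 0"
  shows "isCont (Phi lam q A b) x"
proof -
  have "isCont (\<lambda>x. A *v x - b) x"
    by (intro continuous_intros linear_continuous_at matrix_vector_mul_linear)
  moreover have "isCont q (A *v x - b)"
    using assms(1) by (simp add: continuous_on_eq_continuous_at)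
  ultimately have "isCont (\<lambda>x. q (A *v x - b)) x"
    using continuous_at_compose[of x "\<lambda>x. A *v x - b" q] by (simp add: comp_def)
  moreover have "isCont l1norm x"
    using continuous_on_l1norm continuous_on_eq_continuous_at[OF open_UNIV] by blast
  ultimately show ?thesis
    unfolding Phi_def using \<open>x \<noteq> 0\<close> by (intro continuous_intros) auto
qed

lemma Phi_limit_ge_at_zero:
  assumes "lam \<ge> 0" and "continuous_on UNIV q"
    and "\<And>k. y k \<noteq> 0" and "y \<longlonglongrightarrow> 0"
    and "(\<lambda>k. Phi lam q A b (y k)) \<longlonglongrightarrow> c"
  shows "lam + q (- b) \<le> c"
proof -
  have "(\<lambda>k. A *v y k - b) \<longlonglongrightarrow> A *v 0 - b"
    by (intro tendsto_intros \<open>y \<longlonglongrightarrow> 0\<close> bounded_linear.tendsto[OF matrix_vector_mul_bounded_linear])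
  then have "(\<lambda>k. lam + q (A *v y k - b)) \<longlonglongrightarrow> lam + q (- b)"
    by (intro tendsto_intros continuous_on_tendsto_compose[OF \<open>continuous_on UNIV q\<close>]) auto
  moreover have "lam + q (A *v y k - b) \<le> Phi lam q A b (y k)" for k
    using lam_plus_q_le_Phi \<open>lam \<ge> 0\<close> \<open>y k \<noteq> 0\<close> by blast
  ultimately show ?thesis
    using assms(5) by (intro LIMSEQ_le) auto
qed

theorem lemma3p1:
  fixes lam :: real
    and A :: "real ^ 'n ^ 'm" and b :: "real ^ 'm"
    and q1 q2 :: "real ^ 'm \<Rightarrow> real"
    and grad :: "real ^ 'm \<Rightarrow> real ^ 'm"
    and L :: real
    and lo hi :: "'n \<Rightarrow> ereal"
    and xs :: "nat \<Rightarrow> real ^ 'n"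
    and xstar :: "real ^ 'n"
  assumes lam_pos: "lam > 0"
    and q1_grad: "\<And>y. (q1 has_derivative (\<lambda>h. grad y \<bullet> h)) (at y)"
    and grad_lip: "L-lipschitz_on UNIV grad"
    and q2_convex: "convex_on UNIV q2"
    and q2_cont: "continuous_on UNIV q2"
    and q_nonneg: "\<And>y. q1 y - q2 y \<ge> 0"
    and lo_fin: "\<And>i. lo i \<noteq> PInfty"
    and hi_fin: "\<And>i. hi i \<noteq> MInfty"
    and zero_in: "0 \<in> hyperrect lo hi"
    and nu_lt: "(INF x\<in>hyperrect lo hi - {0}. Phi lam (\<lambda>y. q1 y - q2 y) A b x)
                  < lam + (q1 (- b) - q2 (- b))"
    and xs_in: "\<And>k. xs k \<in> hyperrect lo hi - {0}"
    and xs_min: "(\<lambda>k. Phi lam (\<lambda>y. q1 y - q2 y) A b (xs k)) \<longlonglongrightarrow>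
                  (INF x\<in>hyperrect lo hi - {0}. Phi lam (\<lambda>y. q1 y - q2 y) A b x)"
    and acc: "\<exists>r. strict_mono r \<and> (xs \<circ> r) \<longlonglongrightarrow> xstar"
  shows "xstar \<in> hyperrect lo hi - {0}
    \<and> Phi lam (\<lambda>y. q1 y - q2 y) A b xstar
        = (INF x\<in>hyperrect lo hi - {0}. Phi lam (\<lambda>y. q1 y - q2 y) A b x)"
proof -
  define q where "q = (\<lambda>y. q1 y - q2 y)"
  define nu where "nu = (INF x\<in>hyperrect lo hi - {0}. Phi lam q A b x)"
  obtain r where "strict_mono r" and "(xs \<circ> r) \<longlonglongrightarrow> xstar"
    using acc by blast
  define y where "y = xs \<circ> r"
  have y_lim: "y \<longlonglongrightarrow> xstar"
    using \<open>(xs \<circ> r) \<longlonglongrightarrow> xstar\<close> by (simp add: y_def)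
  have Phi_lim: "(\<lambda>k. Phi lam q A b (y k)) \<longlonglongrightarrow> nu"
    using LIMSEQ_subseq_LIMSEQ[OF xs_min \<open>strict_mono r\<close>] by (simp add: q_def nu_def y_def comp_def)
  have y_in: "y k \<in> hyperrect lo hi - {0}" for k
    using xs_in by (simp add: y_def)
  have "continuous_on UNIV q1"
    using q1_grad by (meson continuous_at_imp_continuous_on has_derivative_continuous)
  then have q_cont: "continuous_on UNIV q"
    unfolding q_def by (intro continuous_intros q2_cont)
  have "xstar \<in> hyperrect lo hi"
    using closed_sequentially[OF closed_hyperrect] y_in y_lim by blast
  moreover have "xstar \<noteq> 0"
  proof
    assume "xstar = 0"
    then have "lam + q (- b) \<le> nu"
      using Phi_limit_ge_at_zero[OF _ q_cont _ _ Phi_lim] lam_pos y_in y_lim by simp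
    then show False
      using nu_lt by (simp add: q_def nu_def)
  qed
  moreover have "Phi lam q A b xstar = nu"
    using isCont_tendsto_compose[OF isCont_Phi[OF q_cont \<open>xstar \<noteq> 0\<close>] y_lim] Phi_lim
    by (rule LIMSEQ_unique)
  ultimately show ?thesis
    by (simp add: q_def nu_def)
qed

end
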